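(* Let $n\ge2$, $\mathbb W:=\mathbb R^{n\times n}_{\mathrm{sym}}$ with the Frobenius inner product, $D:=\{W\in\mathbb W: W\succeq0,\ \operatorname{rank}W\le1\}$, $G\colon\mathbb W\to\mathbb R^n$, $G(W):=\operatorname{diag}W$, and $C:=\{e\}$ with $e$ the all-ones vector. Let $W$ be feasible, i.e., $W\in D$ and $\operatorname{diag}W=e$; write $W=nuu^\top$ with $u\in\{\pm n^{-1/2}\}^n$. Then $\mathcal N^{\lim}_D(W)\subset\{Y\in\mathbb W: Yu=0\}$, and GMFCQ holds at $W$: whenever $\lambda\in\mathbb R^n$ and $Y\in\mathcal N^{\lim}_D(W)$ satisfy $\operatorname{Diag}(\lambda)+Y=0$, then $\lambda=0$.
   Context: For a closed set $D\subset\mathbb W$, $\Pi_D$ is the (multivalued) Frobenius-norm projection and the limiting normal cone at $\bar W\in D$ is $\mathcal N^{\lim}_D(\bar W):=\limsup_{W'\to\bar W}\operatorname{cone}(W'-\Pi_D(W'))$ (outer set limit). $\operatorname{Diag}(\lambda)$ is the diagonal matrix with diagonal $\lambda$; note $G'(W)^*\lambda=\operatorname{Diag}(\lambda)$ and $\mathcal N_C(G(W))=\mathbb R^n$, so this is the condition $0\in G'(W)^*\lambda+\mathcal N^{\lim}_D(W),\ \lambda\in\mathcal N_C(G(W))\Rightarrow\lambda=0$. Every feasible $W$ has the form $nuu^\top$ with $u\in\{\pm n^{-1/2}\}^n$. *)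

theory Defs
  imports "HOL-Analysis.Analysis"
begin

text \<open>The space W of symmetric n x n real matrices. The library norm on
  real^'n^'n is the Euclidean norm of the vector of rows, i.e. exactly the
  Frobenius norm, so dist below is the Frobenius distance.\<close>
definition sym_mats :: "(real^'n^'n) set" where
  "sym_mats = {W. transpose W = W}"

definition psd :: "real^'n^'n \<Rightarrow> bool" where
  "psd W \<longleftrightarrow> (\<forall>x. 0 \<le> x \<bullet> (W *v x))"

definition rankOneSet :: "(real^'n^'n) set" where
  "rankOneSet = {W \<in> sym_mats. psd W \<and> rank W \<le> 1}"

definition proj :: "(real^'n^'n) set \<Rightarrow> real^'n^'n \<Rightarrow> (real^'n^'n) set" where
  "proj S X = {P \<in> S. \<forall>Q\<in>S. dist X P \<le> dist X Q}"

text \<open>Limiting normal cone: outer (Painleve-Kuratowski) limit of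
  cone(W' - Proj_D(W')) as W' tends to Wbar within the space of symmetric matrices.\<close>
definition lim_normal_cone :: "(real^'n^'n) set \<Rightarrow> real^'n^'n \<Rightarrow> (real^'n^'n) set" where
  "lim_normal_cone S Wb = {Y. \<exists>Wk Yk.
      (\<forall>k. Wk k \<in> sym_mats) \<and> Wk \<longlonglongrightarrow> Wb \<and> Yk \<longlonglongrightarrow> Y \<and>
      (\<forall>k. Yk k \<in> cone hull {Wk k - P | P. P \<in> proj S (Wk k)})}"

definition diag_vec :: "real^'n^'n \<Rightarrow> real^'n" where
  "diag_vec W = (\<chi> i. W $ i $ i)"

definition Diag :: "real^'n \<Rightarrow> real^'n^'n" where
  "Diag l = (\<chi> i j. if i = j then l $ i else 0)"

definition outer :: "real^'n \<Rightarrow> real^'n \<Rightarrow> real^'n^'n" where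
  "outer u v = (\<chi> i j. u $ i * v $ j)"

end

theory Submission
  imports Defs
begin

text \<open>Every point P of the projection of X onto D is a minimiser of the distance to X along
  the curves s \<mapsto> (I + s A) P (I + s A)^T, which stay in D. The first-order condition along
  these curves, with A = x y^T, says that the residual X - P annihilates the range of P. Since
  the projections of W' \<rightarrow> W converge to W, every limiting normal Y satisfies Y W = 0, and for
  W = n u u^T this is Y u = 0. Finally Diag(\<lambda>) u = 0 forces \<lambda> = 0 because no entry of u
  vanishes.\<close>

lemma isCont_mult_nonneg_imp_zero:
  fixes g :: "real \<Rightarrow> real"
  assumes "isCont g 0" and "\<And>s. 0 \<le> s * g s"
  shows "g 0 = 0"
proof -
  have right: "(g \<longlongrightarrow> g 0) (at_right 0)" and left: "(g \<longlongrightarrow> g 0) (at_left 0)"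
    using assms(1) by (auto simp: isCont_def filterlim_at_split)
  have "\<forall>\<^sub>F s in at_right 0. 0 \<le> g s"
    using eventually_at_right_less by (rule eventually_mono) (metis assms(2) zero_le_mult_iff not_le)
  with right have "0 \<le> g 0" by (intro tendsto_lowerbound) auto
  moreover have "\<forall>\<^sub>F s in at_left (0::real). s < 0"
    by (simp add: eventually_at_filter)
  then have "\<forall>\<^sub>F s in at_left 0. g s \<le> 0"
    by (rule eventually_mono) (metis assms(2) zero_le_mult_iff not_le)
  with left have "g 0 \<le> 0" by (intro tendsto_upperbound) auto
  ultimately show ?thesis by simp
qed

lemma tendsto_matrix_vector_mult:
  fixes A :: "nat \<Rightarrow> real^'n^'m" and x :: "nat \<Rightarrow> real^'n"
  assumes "A \<longlonglongrightarrow> A0" and "x \<longlonglongrightarrow> x0"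
  shows "(\<lambda>k. A k *v x k) \<longlonglongrightarrow> A0 *v x0"
proof (rule vec_tendstoI)
  fix i
  have "(\<lambda>k. \<Sum>j\<in>UNIV. A k $ i $ j * x k $ j) \<longlonglongrightarrow> (\<Sum>j\<in>UNIV. A0 $ i $ j * x0 $ j)"
    by (intro tendsto_intros assms)
  then show "(\<lambda>k. (A k *v x k) $ i) \<longlonglongrightarrow> (A0 *v x0) $ i"
    by (simp add: matrix_vector_mult_def)
qed

lemma matrix_mul_add_rdistrib: "(B + C) ** A = B ** A + C ** (A :: 'a::semiring_1^'n^'m)"
  by (vector matrix_matrix_mult_def sum.distrib[symmetric] field_simps)

lemma transpose_add: "transpose (A + B) = transpose A + transpose (B :: 'a::semiring_1^'n^'m)"
  by (vector transpose_def)

lemma inner_matrix_outer: "(R :: real^'n^'n) \<bullet> outer x y = x \<bullet> (R *v y)"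
  by (simp add: inner_vec_def outer_def matrix_vector_mult_def sum_distrib_left mult_ac)

lemma outer_matrix_mul: "outer x y ** (P :: real^'n^'n) = outer x (transpose P *v y)"
  by (vector outer_def matrix_matrix_mult_def matrix_vector_mult_def transpose_def
      sum_distrib_left mult_ac)

lemma matrix_mul_transpose_outer: "(P :: real^'n^'n) ** transpose (outer x y) = outer (P *v y) x"
  by (vector outer_def matrix_matrix_mult_def matrix_vector_mult_def transpose_def
      sum_distrib_left mult_ac)

lemma outer_mult_vector: "outer x y *v z = (y \<bullet> z) *\<^sub>R (x :: real^'n)"
  by (vector outer_def matrix_vector_mult_def inner_vec_def sum_distrib_left sum_distrib_right
      mult_ac)

lemma Diag_mult_vector: "Diag l *v x = (\<chi> i. l $ i * x $ i)"
  by (simp add: Diag_def matrix_vector_mult_def vec_eq_iff if_distrib if_distribR cong: if_cong)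

lemma inner_transpose_left: "x \<bullet> (M *v y) = (transpose M *v x) \<bullet> (y :: real^'n)"
  by (metis dot_lmul_matrix transpose_transpose vector_transpose_matrix)

lemma subspace_sym_mats: "subspace (sym_mats :: (real^'n^'n) set)"
  by (auto simp: subspace_def sym_mats_def transpose_def vec_eq_iff)

lemma closed_sym_mats: "closed (sym_mats :: (real^'n^'n) set)"
proof -
  have eq: "sym_mats = (\<Inter>i. \<Inter>j. {A :: real^'n^'n. A $ i $ j = A $ j $ i})"
    by (auto simp: sym_mats_def transpose_def vec_eq_iff)
  show ?thesis
    unfolding eq by (intro closed_INT ballI closed_Collect_eq continuous_intros)
qed

lemma rankOneSet_congruence:
  fixes P M :: "real^'n^'n"
  assumes "P \<in> rankOneSet"
  shows "M ** P ** transpose M \<in> rankOneSet"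
proof -
  have sym: "transpose P = P" and psd: "psd P" and rank: "rank P \<le> 1"
    using assms by (auto simp: rankOneSet_def sym_mats_def)
  have "transpose (M ** P ** transpose M) = M ** P ** transpose M"
    by (simp add: matrix_transpose_mul sym matrix_mul_assoc)
  moreover have "psd (M ** P ** transpose M)"
    unfolding psd_def
  proof
    fix x :: "real^'n"
    have "x \<bullet> ((M ** P ** transpose M) *v x) = (transpose M *v x) \<bullet> (P *v (transpose M *v x))"
      by (simp only: matrix_vector_mul_assoc[symmetric] inner_transpose_left)
    then show "0 \<le> x \<bullet> ((M ** P ** transpose M) *v x)"
      using psd by (simp add: psd_def)
  qed
  moreover have "rank (M ** P ** transpose M) \<le> 1"
    using rank_mul_le_left[of "M ** P" "transpose M"] rank_mul_le_right[of M P] rank by linarith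
  ultimately show ?thesis by (simp add: rankOneSet_def sym_mats_def)
qed

lemma proj_curve_inner_eq_zero:
  fixes X P B C :: "real^'n^'n"
  assumes "P \<in> proj S X" and "\<And>s. P + s *\<^sub>R B + s\<^sup>2 *\<^sub>R C \<in> S"
  shows "(X - P) \<bullet> B = 0"
proof -
  define R where "R = X - P"
  define g where "g s = -2 * (R \<bullet> B) + (B \<bullet> B - 2 * (R \<bullet> C)) * s + 2 * (B \<bullet> C) * s\<^sup>2
    + (C \<bullet> C) * s ^ 3" for s
  have "0 \<le> s * g s" for s
  proof -
    have "dist X P \<le> dist X (P + s *\<^sub>R B + s\<^sup>2 *\<^sub>R C)"
      using assms by (simp add: proj_def)
    then have "norm R \<le> norm (R - s *\<^sub>R B - s\<^sup>2 *\<^sub>R C)"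
      by (simp add: dist_norm R_def algebra_simps)
    then have "R \<bullet> R \<le> (R - s *\<^sub>R B - s\<^sup>2 *\<^sub>R C) \<bullet> (R - s *\<^sub>R B - s\<^sup>2 *\<^sub>R C)"
      by (simp add: power_mono flip: power2_norm_eq_inner)
    also have "\<dots> = R \<bullet> R + s * g s"
      by (simp add: g_def inner_diff_left inner_diff_right inner_commute[of B R]
          inner_commute[of C R] inner_commute[of C B] power2_eq_square power3_eq_cube
          algebra_simps)
    finally show ?thesis by simp
  qed
  moreover have "isCont g 0"
    unfolding g_def by (intro continuous_intros)
  ultimately have "g 0 = 0"
    by (rule isCont_mult_nonneg_imp_zero[rotated])
  then show ?thesis by (simp add: g_def R_def)
qed

lemma proj_rankOneSet_residual_mult:
  fixes X P :: "real^'n^'n"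
  assumes X: "X \<in> sym_mats" and P: "P \<in> proj rankOneSet X"
  shows "(X - P) ** P = 0"
proof -
  define R where "R = X - P"
  have PD: "P \<in> rankOneSet" using P by (simp add: proj_def)
  have Psym: "transpose P = P" using PD by (simp add: rankOneSet_def sym_mats_def)
  have Rsym: "transpose R = R"
    using X Psym by (simp add: R_def sym_mats_def transpose_def vec_eq_iff)
  have orth: "x \<bullet> (R *v (P *v y)) = 0" for x y
  proof -
    define A where "A = outer x y"
    define B where "B = A ** P + P ** transpose A"
    define C where "C = A ** P ** transpose A"
    have curve: "P + s *\<^sub>R B + s\<^sup>2 *\<^sub>R C = (mat 1 + s *\<^sub>R A) ** P ** transpose (mat 1 + s *\<^sub>R A)"
      for s by (simp add: B_def C_def transpose_add transpose_scalar matrix_add_ldistrib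
          matrix_mul_add_rdistrib scalar_matrix_assoc[symmetric] matrix_scalar_ac
          power2_eq_square algebra_simps)
    have "R \<bullet> B = 0"
      unfolding R_def
      by (rule proj_curve_inner_eq_zero[OF P, where B = B and C = C])
        (metis curve rankOneSet_congruence[OF PD])
    moreover have "R \<bullet> B = x \<bullet> (R *v (P *v y)) + (P *v y) \<bullet> (R *v x)"
      by (simp add: B_def A_def inner_add_right outer_matrix_mul matrix_mul_transpose_outer
          inner_matrix_outer Psym)
    moreover have "(P *v y) \<bullet> (R *v x) = x \<bullet> (R *v (P *v y))"
      by (metis inner_transpose_left Rsym inner_commute)
    ultimately show ?thesis by simp
  qed
  have "(R ** P) *v y = 0" for y
    using orth[of "R *v (P *v y)" y] by (simp add: matrix_vector_mul_assoc)
  then show ?thesis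
    unfolding R_def by (simp add: matrix_eq)
qed

lemma proj_tendsto:
  assumes "W \<in> S" and "Wk \<longlonglongrightarrow> W" and "\<And>k. P k \<in> proj S (Wk k)"
  shows "P \<longlonglongrightarrow> W"
proof -
  have bound: "dist (P k) W \<le> 2 * dist (Wk k) W" for k
  proof -
    have "dist (Wk k) (P k) \<le> dist (Wk k) W"
      using assms(1,3) by (simp add: proj_def)
    then show ?thesis
      using dist_triangle[of "P k" W "Wk k"] dist_commute[of "P k" "Wk k"] by linarith
  qed
  have "(\<lambda>k. 2 * dist (Wk k) W) \<longlonglongrightarrow> 0"
    using assms(2) by (intro tendsto_mult_right_zero tendsto_dist_iff[THEN iffD1])
  then have "(\<lambda>k. dist (P k) W) \<longlonglongrightarrow> 0"
    by (rule tendsto_sandwich[where f = "\<lambda>_. 0", rotated 3])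
      (simp_all add: always_eventually bound)
  then show ?thesis
    by (rule tendsto_dist_iff[THEN iffD2])
qed

lemma lim_normal_cone_elim:
  assumes "Y \<in> lim_normal_cone S W"
  obtains Wk P c where "\<And>k. Wk k \<in> sym_mats" and "Wk \<longlonglongrightarrow> W"
    and "\<And>k. P k \<in> proj S (Wk k)" and "(\<lambda>k. c k *\<^sub>R (Wk k - P k)) \<longlonglongrightarrow> Y"
proof -
  obtain Wk Yk where Wk: "\<forall>k. Wk k \<in> sym_mats" "Wk \<longlonglongrightarrow> W" and Yk: "Yk \<longlonglongrightarrow> Y"
    and cone: "\<forall>k. Yk k \<in> cone hull {Wk k - P | P. P \<in> proj S (Wk k)}"
    using assms unfolding lim_normal_cone_def by blast
  have "\<forall>k. \<exists>c P. P \<in> proj S (Wk k) \<and> Yk k = c *\<^sub>R (Wk k - P)"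
    using cone unfolding cone_hull_expl by blast
  then obtain c P where P: "\<And>k. P k \<in> proj S (Wk k)" and "\<And>k. Yk k = c k *\<^sub>R (Wk k - P k)"
    by metis
  then have "Yk = (\<lambda>k. c k *\<^sub>R (Wk k - P k))"
    by auto
  with Wk Yk P show ?thesis
    by (intro that[of Wk P c]) simp_all
qed

lemma lim_normal_cone_rankOneSet:
  fixes W Y :: "real^'n^'n"
  assumes "Y \<in> lim_normal_cone rankOneSet W" and "W \<in> rankOneSet"
  shows "Y \<in> sym_mats" and "Y ** W = 0"
proof -
  obtain Wk P c where Wk: "\<And>k. Wk k \<in> sym_mats" "Wk \<longlonglongrightarrow> W"
    and P: "\<And>k. P k \<in> proj rankOneSet (Wk k)"
    and Y: "(\<lambda>k. c k *\<^sub>R (Wk k - P k)) \<longlonglongrightarrow> Y"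
    using lim_normal_cone_elim[OF assms(1)] by blast
  have "P k \<in> sym_mats" for k
    using P[of k] by (simp add: proj_def rankOneSet_def)
  then have "c k *\<^sub>R (Wk k - P k) \<in> sym_mats" for k
    using Wk(1) by (intro subspace_mul subspace_diff subspace_sym_mats)
  then show "Y \<in> sym_mats"
    by (rule closed_sequentially[OF closed_sym_mats _ Y])
  have "(\<lambda>k. (c k *\<^sub>R (Wk k - P k)) *v (P k *v x)) = (\<lambda>k. 0)" for x
    using proj_rankOneSet_residual_mult[OF Wk(1) P]
    by (simp add: matrix_vector_mul_assoc flip: scalar_matrix_assoc)
  moreover have "(\<lambda>k. (c k *\<^sub>R (Wk k - P k)) *v (P k *v x)) \<longlonglongrightarrow> Y *v (W *v x)" for x
    using proj_tendsto[OF assms(2) Wk(2) P]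
    by (intro tendsto_matrix_vector_mult Y tendsto_const)
  ultimately have "Y *v (W *v x) = 0" for x
    using LIMSEQ_const_iff by metis
  then show "Y ** W = 0"
    by (simp add: matrix_eq matrix_vector_mul_assoc)
qed

theorem mainTheorem16:
  fixes W :: "real^'n^'n" and u :: "real^'n"
  assumes "CARD('n) \<ge> 2"
    and "W \<in> rankOneSet"
    and "diag_vec W = (\<chi> i. 1)"
    and "\<forall>i. u $ i = 1 / sqrt (real CARD('n)) \<or> u $ i = - 1 / sqrt (real CARD('n))"
    and "W = real CARD('n) *\<^sub>R outer u u"
  shows "lim_normal_cone rankOneSet W \<subseteq> {Y \<in> sym_mats. Y *v u = 0} \<and>
         (\<forall>l Y. Y \<in> lim_normal_cone rankOneSet W \<and> Diag l + Y = 0 \<longrightarrow> l = 0)"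
proof -
  define n where "n = real CARD('n)"
  have usq: "u $ i * u $ i = 1 / n" for i
    using assms(4)[rule_format, of i] by (auto simp: n_def power_divide simp flip: power2_eq_square)
  have u_nz: "u $ i \<noteq> 0" for i
    using usq[of i] by (auto simp: n_def)
  have "u \<bullet> u = 1"
    by (simp add: inner_vec_def usq n_def)
  then have Wu: "W *v u = n *\<^sub>R u"
    by (simp add: assms(5) n_def outer_mult_vector flip: scaleR_matrix_vector_assoc)
  have normal: "Y \<in> sym_mats \<and> Y *v u = 0" if "Y \<in> lim_normal_cone rankOneSet W" for Y
  proof -
    have "n *\<^sub>R (Y *v u) = (Y ** W) *v u"
      by (simp add: Wu matrix_vector_mult_scaleR flip: matrix_vector_mul_assoc)
    then show ?thesis
      using lim_normal_cone_rankOneSet[OF that assms(2)] by (simp add: n_def)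
  qed
  have "l = 0" if "Y \<in> lim_normal_cone rankOneSet W" and "Diag l + Y = 0" for l Y
  proof -
    have "Diag l *v u = (Diag l + Y) *v u - Y *v u"
      by (simp add: matrix_vector_mult_add_rdistrib)
    also have "\<dots> = 0"
      using normal[OF that(1)] that(2) by simp
    finally show "l = 0"
      using u_nz by (simp add: Diag_mult_vector vec_eq_iff)
  qed
  with normal show ?thesis by blast
qed

end
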